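(* Let $m\ge2$, $w$ an infinite periodic or Sturmian word over $\{0,1\}$ with slope $\alpha=\pi(w)$, $\beta=\frac1{m+\alpha}$, and $A=A(m,w)$ with the $\mathbb{Z}_2$-grading in which $z_1^{(1)},a$ are even and $b$ is odd. For every real $\varepsilon>0$ there exists $n_0$ such that whenever $n\ge n_0$ and $P_{k,n-k}(A)\ne0$, $$\beta-\varepsilon\le\frac{n-k}{n}\le\beta+\varepsilon.$$
   Context: $F$ is a field of characteristic zero. $A(m,w)$: basis $\{a,b,z_j^{(i)}: i\ge1,1\le j\le m+w_i\}$, products $z_j^{(i)}a=z_{j+1}^{(i)}$ for $j<m+w_i$, $z_{m+w_i}^{(i)}b=z_1^{(i+1)}$, all other products zero. The grading: $A_0=\mathrm{span}\{a,z_j^{(i)}:i\text{ odd}\}$, $A_1=\mathrm{span}\{b,z_j^{(i)}:i\text{ even}\}$. Slope $\pi(w)=\lim_n(w_1+\dots+w_n)/n$. $P_{k,n-k}(A)=P_{k,n-k}/(P_{k,n-k}\cap Id^{gr}(A))$, where $P_{k,n-k}$ is the space of polynomials multilinear in even variables $x_1..x_k$ and odd variables $y_1..y_{n-k}$ in the free nonassociative algebra and $Id^{gr}(A)$ the graded identities of $A$. *)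

theory Defs
  imports Complex_Main "HOL-Library.Multiset"
begin

text \<open>An infinite word over {0,1} is a map u :: nat => nat with values in {0,1};
  the paper's letter w_i (i >= 1) is u (i - 1).\<close>

definition binary_word :: "(nat \<Rightarrow> nat) \<Rightarrow> bool" where
  "binary_word u \<longleftrightarrow> (\<forall>i. u i \<in> {0, 1})"

definition periodic_word :: "(nat \<Rightarrow> nat) \<Rightarrow> bool" where
  "periodic_word u \<longleftrightarrow> (\<exists>p>0. \<forall>i. u (i + p) = u i)"

definition factors :: "(nat \<Rightarrow> nat) \<Rightarrow> nat \<Rightarrow> nat list set" where
  "factors u n = {map u [i..<i + n] | i. True}"

definition sturmian_word :: "(nat \<Rightarrow> nat) \<Rightarrow> bool" where
  "sturmian_word u \<longleftrightarrow> (\<forall>n. finite (factors u n) \<and> card (factors u n) = n + 1)"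

definition has_slope :: "(nat \<Rightarrow> nat) \<Rightarrow> real \<Rightarrow> bool" where
  "has_slope u \<alpha> \<longleftrightarrow> (\<lambda>n. (\<Sum>i<n. real (u i)) / real n) \<longlonglongrightarrow> \<alpha>"

text \<open>Basis symbols: GA = a, GB = b, GZ i j = z_j^(i).\<close>
datatype gen = GA | GB | GZ nat nat

definition basis_set :: "nat \<Rightarrow> (nat \<Rightarrow> nat) \<Rightarrow> gen set" where
  "basis_set m u = {GA, GB} \<union> {GZ i j | i j. 1 \<le> i \<and> 1 \<le> j \<and> j \<le> m + u (i - 1)}"

text \<open>Product of basis elements (None = zero).\<close>
fun bprod :: "nat \<Rightarrow> (nat \<Rightarrow> nat) \<Rightarrow> gen \<Rightarrow> gen \<Rightarrow> gen option" where
  "bprod m u (GZ i j) GA = (if j < m + u (i - 1) then Some (GZ i (j + 1)) else None)"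
| "bprod m u (GZ i j) GB = (if j = m + u (i - 1) then Some (GZ (i + 1) 1) else None)"
| "bprod m u _ _ = None"

definition supp :: "('b \<Rightarrow> 'f::zero) \<Rightarrow> 'b set" where
  "supp v = {c. v c \<noteq> 0}"

definition A_carrier :: "nat \<Rightarrow> (nat \<Rightarrow> nat) \<Rightarrow> (gen \<Rightarrow> 'f::field) set" where
  "A_carrier m u = {v. finite (supp v) \<and> supp v \<subseteq> basis_set m u}"

definition A_mult :: "nat \<Rightarrow> (nat \<Rightarrow> nat) \<Rightarrow> (gen \<Rightarrow> 'f::field) \<Rightarrow> (gen \<Rightarrow> 'f) \<Rightarrow> (gen \<Rightarrow> 'f)" where
  "A_mult m u v1 v2 = (\<lambda>c. \<Sum>p \<in> supp v1 \<times> supp v2.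
      if bprod m u (fst p) (snd p) = Some c then v1 (fst p) * v2 (snd p) else 0)"

definition A_even :: "nat \<Rightarrow> (nat \<Rightarrow> nat) \<Rightarrow> (gen \<Rightarrow> 'f::field) set" where
  "A_even m u = {v \<in> A_carrier m u. supp v \<subseteq> {GA} \<union> {GZ i j | i j. odd i}}"

definition A_odd :: "nat \<Rightarrow> (nat \<Rightarrow> nat) \<Rightarrow> (gen \<Rightarrow> 'f::field) set" where
  "A_odd m u = {v \<in> A_carrier m u. supp v \<subseteq> {GB} \<union> {GZ i j | i j. even i}}"

text \<open>Graded variables: X i = even variable x_i, Y j = odd variable y_j.\<close>
datatype gvar = X nat | Y nat

datatype 'v nmon = Var 'v | Mul "'v nmon" "'v nmon"

fun leaves :: "'v nmon \<Rightarrow> 'v list" where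
  "leaves (Var v) = [v]"
| "leaves (Mul s t) = leaves s @ leaves t"

definition is_poly :: "(gvar nmon \<Rightarrow> 'f::field) \<Rightarrow> bool" where
  "is_poly f \<longleftrightarrow> finite (supp f)"

definition P_space :: "nat \<Rightarrow> nat \<Rightarrow> (gvar nmon \<Rightarrow> 'f::field) set" where
  "P_space k l = {f. is_poly f \<and> (\<forall>t \<in> supp f.
      mset (leaves t) = mset (map X [1..<k+1] @ map Y [1..<l+1]))}"

fun mon_eval :: "nat \<Rightarrow> (nat \<Rightarrow> nat) \<Rightarrow> (gvar \<Rightarrow> gen \<Rightarrow> 'f::field) \<Rightarrow> gvar nmon \<Rightarrow> gen \<Rightarrow> 'f" where
  "mon_eval m u \<phi> (Var v) = \<phi> v"
| "mon_eval m u \<phi> (Mul s t) = A_mult m u (mon_eval m u \<phi> s) (mon_eval m u \<phi> t)"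

definition poly_eval :: "nat \<Rightarrow> (nat \<Rightarrow> nat) \<Rightarrow> (gvar \<Rightarrow> gen \<Rightarrow> 'f::field) \<Rightarrow> (gvar nmon \<Rightarrow> 'f) \<Rightarrow> gen \<Rightarrow> 'f" where
  "poly_eval m u \<phi> f = (\<lambda>c. \<Sum>t \<in> supp f. f t * mon_eval m u \<phi> t c)"

definition graded_subst :: "nat \<Rightarrow> (nat \<Rightarrow> nat) \<Rightarrow> (gvar \<Rightarrow> gen \<Rightarrow> 'f::field) \<Rightarrow> bool" where
  "graded_subst m u \<phi> \<longleftrightarrow> (\<forall>i. \<phi> (X i) \<in> A_even m u) \<and> (\<forall>j. \<phi> (Y j) \<in> A_odd m u)"

definition graded_identity :: "nat \<Rightarrow> (nat \<Rightarrow> nat) \<Rightarrow> (gvar nmon \<Rightarrow> 'f::field) \<Rightarrow> bool" where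
  "graded_identity m u f \<longleftrightarrow> is_poly f \<and>
     (\<forall>\<phi>. graded_subst m u \<phi> \<longrightarrow> poly_eval m u \<phi> f = (\<lambda>_. 0))"

text \<open>P_{k,l}(A) = P_{k,l} / (P_{k,l} \<inter> Id^gr(A)) is nonzero iff P_{k,l} is not
  contained in Id^gr(A).  The field F is fixed by the type 'f.\<close>
definition P_quot_nonzero :: "'f::field itself \<Rightarrow> nat \<Rightarrow> (nat \<Rightarrow> nat) \<Rightarrow> nat \<Rightarrow> nat \<Rightarrow> bool" where
  "P_quot_nonzero (_ :: 'f itself) m u k l \<longleftrightarrow>
     (\<exists>f :: gvar nmon \<Rightarrow> 'f. f \<in> P_space k l \<and> \<not> graded_identity m u f)"

end

theory Submission
  imports Defs
begin

text \<open>
  A multilinear monomial in n variables that does not vanish on A evaluates on basis elements to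
  some z_j^(i), reached from a starting z by n - 1 right multiplications along the chain
  z_1^(1) -a-> ... -a-> z_(m+w_1)^(1) -b-> z_1^(2) -a-> ...; the odd variables are the b-steps,
  plus possibly the start. Crossing d levels thus takes m d + (w_i + ... + w_(i+d-1)) + O(m)
  steps while using d + O(1) odd variables. Periodic and Sturmian words are balanced, hence
  w_i + ... + w_(i+d-1) = d alpha + O(1), so n = (n - k)(m + alpha) + O(1).

  That Sturmian words are balanced is the classical argument: a shortest unbalanced pair of
  windows yields factors 0 w 0 and 1 w 1 with w a palindrome. Counting factors of length n along
  the two kinds of returns to w shows that each occurrence of w is preceded by the letter that
  followed the previous one. If a w (1 - a) does not occur, then once w is preceded by a, so is
  every later occurrence, contradicting the recurrence of (1 - a) w.
\<close>

definition factor_at :: "(nat \<Rightarrow> nat) \<Rightarrow> nat \<Rightarrow> nat \<Rightarrow> nat list" where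
  "factor_at x t n = map x [t..<t+n]"

lemma factors_eq_factor_at_range: "factors x n = range (\<lambda>i. factor_at x i n)"
  by (auto simp: factors_def factor_at_def)

lemma length_factor_at [simp]: "length (factor_at x t n) = n"
  by (simp add: factor_at_def)

lemma nth_factor_at [simp]: "k < n \<Longrightarrow> factor_at x t n ! k = x (t + k)"
  by (simp add: factor_at_def)

lemma factor_at_in_factors [simp]: "factor_at x t n \<in> factors x n"
  by (simp add: factors_eq_factor_at_range)

lemma factor_at_eq_iff: "factor_at x a n = factor_at x b n \<longleftrightarrow> (\<forall>k<n. x (a+k) = x (b+k))"
  by (auto simp: list_eq_iff_nth_eq)

lemma factor_at_Suc: "factor_at x t (Suc n) = factor_at x t n @ [x (t+n)]"
  by (simp add: factor_at_def)

lemma factor_at_Cons: "factor_at x t (Suc n) = x t # factor_at x (Suc t) n"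
proof -
  have "[t..<t+Suc n] = t # [Suc t..<Suc t+n]" by (subst upt_conv_Cons) auto
  then show ?thesis by (simp add: factor_at_def)
qed

lemma factor_at_Suc_Suc:
  "factor_at x t (Suc (Suc n)) = [x t] @ factor_at x (t+1) n @ [x (t+1+n)]"
proof -
  have "factor_at x (Suc t) (Suc n) = factor_at x (Suc t) n @ [x (Suc t + n)]"
    by (rule factor_at_Suc)
  then show ?thesis by (simp only: factor_at_Cons) simp
qed

lemma factor_at_shift: "factor_at (\<lambda>s. x (s+T)) i n = factor_at x (i+T) n"
  by (simp add: list_eq_iff_nth_eq ac_simps)

lemma take_factor_at: "m \<le> n \<Longrightarrow> take m (factor_at x t n) = factor_at x t m"
  by (simp add: factor_at_def take_map)

lemma factors_0: "factors x 0 = {[]}"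
  by (auto simp: factors_eq_factor_at_range factor_at_def)

lemma length_in_factors: "v \<in> factors x n \<Longrightarrow> length v = n"
  by (auto simp: factors_eq_factor_at_range)

lemma image_take_factors_Suc: "take n ` factors x (Suc n) = factors x n"
proof
  show "take n ` factors x (Suc n) \<subseteq> factors x n"
    by (auto simp: factors_eq_factor_at_range take_factor_at)
  show "factors x n \<subseteq> take n ` factors x (Suc n)"
  proof
    fix v assume "v \<in> factors x n"
    then obtain i where "v = factor_at x i n" by (auto simp: factors_eq_factor_at_range)
    then have "v = take n (factor_at x i (Suc n))" by (simp add: take_factor_at)
    then show "v \<in> take n ` factors x (Suc n)" by auto
  qed
qed

lemma factors_shift_subset: "factors (\<lambda>s. x (s+T)) n \<subseteq> factors x n"
  by (auto simp: factors_eq_factor_at_range factor_at_shift)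

lemma snoc_in_factors_iff:
  "w @ [b] \<in> factors x (Suc n) \<longleftrightarrow> (\<exists>s. factor_at x s n = w \<and> x (s+n) = b)"
proof
  assume "w @ [b] \<in> factors x (Suc n)"
  then obtain s where "w @ [b] = factor_at x s n @ [x (s+n)]"
    by (auto simp: factors_eq_factor_at_range factor_at_Suc)
  then show "\<exists>s. factor_at x s n = w \<and> x (s+n) = b" by auto
next
  assume "\<exists>s. factor_at x s n = w \<and> x (s+n) = b"
  then obtain s where "w @ [b] = factor_at x s (Suc n)" by (auto simp: factor_at_Suc)
  then show "w @ [b] \<in> factors x (Suc n)" by simp
qed

lemma framed_in_factors_iff:
  "[c] @ w @ [b] \<in> factors x (Suc (Suc n)) \<longleftrightarrow>
    (\<exists>s. x s = c \<and> factor_at x (s+1) n = w \<and> x (s+1+n) = b)"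
proof
  assume "[c] @ w @ [b] \<in> factors x (Suc (Suc n))"
  then obtain s where "[c] @ w @ [b] = factor_at x s (Suc (Suc n))"
    by (auto simp: factors_eq_factor_at_range)
  then have "[c] @ w @ [b] = [x s] @ factor_at x (s+1) n @ [x (s+1+n)]"
    by (simp only: factor_at_Suc_Suc)
  then show "\<exists>s. x s = c \<and> factor_at x (s+1) n = w \<and> x (s+1+n) = b" by auto
next
  assume "\<exists>s. x s = c \<and> factor_at x (s+1) n = w \<and> x (s+1+n) = b"
  then obtain s where "x s = c" "factor_at x (s+1) n = w" "x (s+1+n) = b" by blast
  then have "[c] @ w @ [b] = factor_at x s (Suc (Suc n))" by (simp only: factor_at_Suc_Suc)
  then show "[c] @ w @ [b] \<in> factors x (Suc (Suc n))" by simp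
qed

text \<open>Each factor of length n has at least one right extension; if two factors had two each,
  there would be at least n + 3 factors of length n + 1.\<close>
lemma sturmian_right_special_unique:
  assumes fin: "\<And>n. finite (factors x n)" and cd: "\<And>n. card (factors x n) = n + 1"
    and a1: "v1 @ [0] \<in> factors x (Suc n)" and a2: "v1 @ [1] \<in> factors x (Suc n)"
    and b1: "v2 @ [0] \<in> factors x (Suc n)" and b2: "v2 @ [1] \<in> factors x (Suc n)"
  shows "v1 = v2"
proof (rule ccontr)
  assume ne: "v1 \<noteq> v2"
  define F' where "F' = factors x (Suc n)"
  define F where "F = factors x n"
  define A where "A v = {y \<in> F'. take n y = v}" for v
  have l1: "length v1 = n" using length_in_factors[OF a1] by simp
  have l2: "length v2 = n" using length_in_factors[OF b1] by simp
  have tf: "take n ` F' = F" unfolding F'_def F_def by (rule image_take_factors_Suc)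
  have U: "F' = \<Union>(A ` F)" using tf unfolding A_def by auto
  have finF: "finite F" "finite F'" unfolding F_def F'_def using fin by auto
  have finA: "\<forall>v\<in>F. finite (A v)" using finF unfolding A_def by auto
  have card_F': "card F' = (\<Sum>v\<in>F. card (A v))"
    unfolding U by (rule card_UN_disjoint) (use finF finA in \<open>auto simp: A_def\<close>)
  have ge1: "card (A v) \<ge> 1" if "v \<in> F" for v
  proof -
    from that tf obtain y where "y \<in> F'" "take n y = v" by auto
    then have "A v \<noteq> {}" unfolding A_def by auto
    then show ?thesis using finA that by (simp add: Suc_le_eq card_gt_0_iff)
  qed
  have v1F: "v1 \<in> F" using tf a1 l1 unfolding F'_def by force
  have v2F: "v2 \<in> F" using tf b1 l2 unfolding F'_def by force
  have ge2: "card (A v) \<ge> 2" if "v \<in> F" "v @ [0] \<in> F'" "v @ [1] \<in> F'" "length v = n" for v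
  proof -
    have "{v @ [0], v @ [1]} \<subseteq> A v" using that unfolding A_def by auto
    then have "card {v @ [0], v @ [1]} \<le> card (A v)" using finA that by (intro card_mono) auto
    then show ?thesis by simp
  qed
  have "(\<Sum>v\<in>F. card (A v)) = card F + (\<Sum>v\<in>F. card (A v) - 1)"
  proof -
    have "(\<Sum>v\<in>F. card (A v)) = (\<Sum>v\<in>F. 1 + (card (A v) - 1))"
      by (rule sum.cong) (use ge1 in force)+
    then show ?thesis unfolding sum.distrib by simp
  qed
  moreover have "(\<Sum>v\<in>{v1,v2}. card (A v) - 1) \<le> (\<Sum>v\<in>F. card (A v) - 1)"
    by (rule sum_mono2) (use finF v1F v2F in auto)
  moreover have "(\<Sum>v\<in>{v1,v2}. card (A v) - 1) \<ge> 2"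
    using ne ge2[OF v1F _ _ l1] ge2[OF v2F _ _ l2] a1 a2 b1 b2 unfolding F'_def by simp
  ultimately have "card F' \<ge> card F + 2" using card_F' by linarith
  then show False using cd unfolding F'_def F_def by simp
qed

lemma eventually_periodic_factor_at_cover:
  assumes "P > 0" "\<forall>s\<ge>S. x (s+P) = x s"
  shows "\<exists>i'<S+P. factor_at x i N = factor_at x i' N"
proof (induction i rule: less_induct)
  case (less i)
  show ?case
  proof (cases "i < S+P")
    case False
    have "factor_at x i N = factor_at x (i-P) N"
      unfolding factor_at_eq_iff
    proof (intro allI impI)
      fix k
      have "i - P + k \<ge> S" using False by simp
      then have "x (i - P + k + P) = x (i - P + k)" using assms(2) by blast
      moreover have "i - P + k + P = i + k" using False by simp
      ultimately show "x (i+k) = x (i - P + k)" by simp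
    qed
    moreover obtain i' where "i' < S+P" "factor_at x (i-P) N = factor_at x i' N"
      using less.IH[of "i-P"] False assms(1) by auto
    ultimately show ?thesis by auto
  qed blast
qed

lemma sturmian_not_eventually_periodic:
  assumes cd: "\<And>n. card (factors x n) = n + 1"
    and "P > 0" "\<forall>s\<ge>S. x (s+P) = x s"
  shows False
proof -
  let ?N = "S+P"
  have "factors x ?N \<subseteq> (\<lambda>i. factor_at x i ?N) ` {..<S+P}"
    using eventually_periodic_factor_at_cover[OF assms(2,3)]
    by (fastforce simp: factors_eq_factor_at_range)
  then have "card (factors x ?N) \<le> card ((\<lambda>i. factor_at x i ?N) ` {..<S+P})"
    by (intro card_mono) auto
  also have "\<dots> \<le> S+P" using card_image_le[of "{..<S+P}"] by simp
  finally show False using cd[of ?N] by simp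
qed

lemma next_letter_determined_if_complexity_stalls:
  assumes fin: "finite (factors y (Suc k))"
    and le: "card (factors y (Suc k)) \<le> card (factors y k)"
    and eq: "factor_at y a k = factor_at y b k"
  shows "y (a+k) = y (b+k)"
proof -
  define F' where "F' = factors y (Suc k)"
  have "card (take k ` F') = card F'"
    using le card_image_le[OF fin, of "take k"] unfolding F'_def image_take_factors_Suc by simp
  then have "inj_on (take k) F'" using fin unfolding F'_def by (intro eq_card_imp_inj_on) auto
  moreover have "take k (factor_at y a (Suc k)) = take k (factor_at y b (Suc k))"
    using eq by (simp add: take_factor_at)
  ultimately have "factor_at y a (Suc k) = factor_at y b (Suc k)"
    unfolding F'_def by (auto dest: inj_onD)
  then show ?thesis by (simp add: factor_at_Suc)
qed

lemma eventually_periodic_if_next_letter_determined: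
  assumes fin: "finite (factors y k)"
    and det: "\<And>a b. factor_at y a k = factor_at y b k \<Longrightarrow> y (a+k) = y (b+k)"
  shows "\<exists>S P. P > 0 \<and> (\<forall>s\<ge>S. y (s+P) = y s)"
proof -
  define F where "F = factors y k"
  have "\<not> inj_on (\<lambda>s. factor_at y s k) {..card F}"
  proof
    assume "inj_on (\<lambda>s. factor_at y s k) {..card F}"
    then have "card ((\<lambda>s. factor_at y s k) ` {..card F}) = Suc (card F)" by (simp add: card_image)
    moreover have "(\<lambda>s. factor_at y s k) ` {..card F} \<subseteq> F" unfolding F_def by auto
    then have "card ((\<lambda>s. factor_at y s k) ` {..card F}) \<le> card F"
      using fin unfolding F_def by (intro card_mono) auto
    ultimately show False by simp
  qed
  then obtain a b where ab: "a \<noteq> b" "factor_at y a k = factor_at y b k"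
    unfolding inj_on_def by auto
  obtain s1 s2 where s12: "s1 < s2" "factor_at y s1 k = factor_at y s2 k"
  proof (cases "a < b")
    case False
    then have "b < a" using ab(1) by simp
    then show ?thesis using that ab by auto
  qed (use ab in blast)
  have step: "factor_at y (s1+j) k = factor_at y (s2+j) k" for j
  proof (induction j)
    case (Suc j)
    have last: "y (s1+j+k) = y (s2+j+k)" using det[OF Suc] by simp
    show ?case unfolding factor_at_eq_iff
    proof (intro allI impI)
      fix q assume "q < k"
      show "y (s1 + Suc j + q) = y (s2 + Suc j + q)"
      proof (cases "Suc q < k")
        case True
        then have "y (s1+j+Suc q) = y (s2+j+Suc q)" using Suc unfolding factor_at_eq_iff by blast
        then show ?thesis by simp
      next
        case False
        then have "q = k - 1" "k > 0" using \<open>q<k\<close> by auto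
        then show ?thesis using last by (simp add: add.assoc)
      qed
    qed
  qed (use s12 in simp)
  show ?thesis
  proof (intro exI conjI allI impI)
    show "s2 - s1 > 0" using s12 by simp
    fix s assume "s \<ge> s1 + k"
    then have "s = s1 + (s - (s1+k)) + k" by simp
    then obtain j where "s = s1 + j + k" by blast
    then show "y (s + (s2 - s1)) = y s" using det[OF step[of j]] s12(1) by (simp add: ac_simps)
  qed
qed

lemma complexity_stalls_if_card_le:
  assumes "card (factors y N) \<le> N"
  shows "\<exists>k<N. card (factors y (Suc k)) \<le> card (factors y k)"
proof (rule ccontr)
  assume "\<not> ?thesis"
  then have grows: "card (factors y k) < card (factors y (Suc k))" if "k < N" for k
    using that by auto
  have "card (factors y k) \<ge> k + 1" if "k \<le> N" for k
    using that
  proof (induction k)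
    case (Suc k)
    then show ?case using grows[of k] by simp
  qed (simp add: factors_0)
  then have "card (factors y N) \<ge> N + 1" by blast
  then show False using assms by simp
qed

text \<open>Recurrence: if the factor at q never occurred beyond T, the shifted word would miss the
  prefix of length q + l, so its complexity would stall and it would be eventually periodic.\<close>
lemma sturmian_factor_recurs:
  assumes fin: "\<And>n. finite (factors x n)" and cd: "\<And>n. card (factors x n) = n + 1"
  shows "\<exists>s\<ge>T. factor_at x s l = factor_at x q l"
proof (rule ccontr)
  assume no: "\<not> ?thesis"
  define y where "y = (\<lambda>s. x (s+T))"
  define N where "N = q + l"
  have finy: "finite (factors y n)" for n
    using fin factors_shift_subset[of x T n] unfolding y_def by (rule rev_finite_subset)
  have "factors y N \<subseteq> factors x N - {factor_at x 0 N}"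
  proof
    fix v assume "v \<in> factors y N"
    then obtain i where v: "v = factor_at x (i+T) N"
      by (auto simp: factors_eq_factor_at_range y_def factor_at_shift)
    have "v \<noteq> factor_at x 0 N"
    proof
      assume "v = factor_at x 0 N"
      then have "factor_at x (i+T+q) l = factor_at x q l"
        using v by (simp add: factor_at_eq_iff N_def add.assoc)
      moreover have "i+T+q \<ge> T" by simp
      ultimately show False using no by blast
    qed
    then show "v \<in> factors x N - {factor_at x 0 N}" using v by simp
  qed
  then have "card (factors y N) \<le> card (factors x N - {factor_at x 0 N})"
    using fin by (intro card_mono) auto
  also have "\<dots> = N" using cd[of N] fin[of N] by simp
  finally obtain k where "card (factors y (Suc k)) \<le> card (factors y k)"
    using complexity_stalls_if_card_le by blast
  then obtain S P where SP: "P > 0" "\<forall>s\<ge>S. y (s+P) = y s"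
    using eventually_periodic_if_next_letter_determined[OF finy]
      next_letter_determined_if_complexity_stalls[OF finy] by metis
  have "\<forall>s\<ge>S+T. x (s+P) = x s"
  proof (intro allI impI)
    fix s assume "s \<ge> S+T"
    then have "s - T \<ge> S" by simp
    then have "y (s - T + P) = y (s - T)" using SP by blast
    then show "x (s+P) = x s" unfolding y_def using \<open>s \<ge> S+T\<close> by simp
  qed
  then show False using sturmian_not_eventually_periodic[OF cd SP(1)] by blast
qed

lemma binary_word_cases: "binary_word x \<Longrightarrow> x i = 0 \<or> x i = 1"
  by (auto simp: binary_word_def)

lemma binary_word_le_1: "binary_word x \<Longrightarrow> x i \<le> 1"
  using binary_word_cases[of x i] by auto

definition weight :: "(nat \<Rightarrow> nat) \<Rightarrow> nat \<Rightarrow> nat \<Rightarrow> nat" where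
  "weight x i L = (\<Sum>k<L. x (i+k))"

definition balanced_with :: "(nat \<Rightarrow> nat) \<Rightarrow> nat \<Rightarrow> bool" where
  "balanced_with x C \<longleftrightarrow> (\<forall>i j L. weight x j L \<le> weight x i L + C)"

text \<open>0 w 0 occurs at s1 and 1 w 1 at s2, for a common w of length n.\<close>
definition framed :: "(nat \<Rightarrow> nat) \<Rightarrow> nat \<Rightarrow> nat \<Rightarrow> nat \<Rightarrow> bool" where
  "framed x n s1 s2 \<longleftrightarrow> x s1 = 0 \<and> x (s1+n+1) = 0 \<and> x s2 = 1 \<and> x (s2+n+1) = 1 \<and>
     (\<forall>k<n. x (s1+1+k) = x (s2+1+k))"

lemma weight_0 [simp]: "weight x i 0 = 0"
  by (simp add: weight_def)

lemma weight_add: "weight x i (a + b) = weight x i a + weight x (i+a) b"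
  by (induction b) (simp_all add: weight_def add.assoc)

lemma weight_Suc: "weight x i (Suc L) = weight x i L + x (i+L)"
  by (simp add: weight_def)

lemma weight_Suc_Cons: "weight x p (Suc k) = x p + (\<Sum>q<k. x (p+1+q))"
  unfolding weight_def by (subst sum.lessThan_Suc_shift) simp

lemma weight_Suc_Suc: "weight x p (Suc (Suc k)) = x p + (\<Sum>q<k. x (p+1+q)) + x (p+1+k)"
  using weight_Suc_Cons[of x p k] weight_Suc[of x p "Suc k"] by simp

lemma weight_mult: "weight x i (q * L) = (\<Sum>r<q. weight x (i + r*L) L)"
proof (induction q)
  case (Suc q)
  have "weight x i (Suc q * L) = weight x i (q*L + L)" by (simp add: add.commute)
  also have "\<dots> = weight x i (q*L) + weight x (i + q*L) L" by (rule weight_add)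
  finally show ?case using Suc by simp
qed simp

lemma weight_le: assumes "binary_word x" shows "weight x i L \<le> L"
proof -
  have "weight x i L \<le> (\<Sum>k<L. 1)"
    unfolding weight_def by (rule sum_mono) (use assms binary_word_le_1 in auto)
  then show ?thesis by simp
qed

text \<open>If no proper subwindow pair shows a weight gap of 2, the running difference of the two
  window weights climbs 0, 1, ..., 1, 2: the windows start and end with 1 vs. 0 and agree in
  between.\<close>
lemma framed_of_minimal_weight_gap:
  assumes bin: "binary_word x" and gap: "weight x j L + 2 \<le> weight x i L"
    and minimal: "\<And>a b. a \<le> b \<Longrightarrow> b \<le> L \<Longrightarrow> b - a < L \<Longrightarrow>
      weight x (i+a) (b-a) \<le> weight x (j+a) (b-a) + 1 \<and>
      weight x (j+a) (b-a) \<le> weight x (i+a) (b-a) + 1"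
  shows "L \<ge> 2 \<and> framed x (L-2) j i"
proof -
  define P where "P m = int (weight x i m) - int (weight x j m)" for m
  have bal: "\<bar>P b - P a\<bar> \<le> 1" if "a \<le> b" "b \<le> L" "b - a < L" for a b
  proof -
    have "b = a + (b - a)" using that by simp
    then have "weight x i b = weight x i a + weight x (i+a) (b-a)"
      "weight x j b = weight x j a + weight x (j+a) (b-a)"
      by (metis weight_add)+
    then show ?thesis using minimal[OF that] unfolding P_def by linarith
  qed
  have P0: "P 0 = 0" unfolding P_def by simp
  have PL: "P L \<ge> 2" using gap unfolding P_def by linarith
  have L2: "L \<ge> 2" using PL weight_le[OF bin, of i L] unfolding P_def by linarith
  have Pm: "P m = 1" if "1 \<le> m" "m < L" for m
    using bal[of 0 m] bal[of m L] that P0 PL by simp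
  have PL2: "P L = 2" using bal[of "L-1" L] Pm[of "L-1"] L2 PL by simp
  have D: "P (Suc k) - P k = int (x (i+k)) - int (x (j+k))" for k
    unfolding P_def by (simp add: weight_Suc)
  have d0: "x i = 1 \<and> x j = 0"
  proof -
    have "int (x i) - int (x j) = 1" using Pm[of 1] L2 P0 D[of 0] by simp
    then show ?thesis using binary_word_cases[OF bin, of i] binary_word_cases[OF bin, of j] by auto
  qed
  have dL: "x (i+(L-1)) = 1 \<and> x (j+(L-1)) = 0"
  proof -
    have "int (x (i+(L-1))) - int (x (j+(L-1))) = 1"
      using Pm[of "L-1"] L2 PL2 D[of "L-1"] by simp
    then show ?thesis
      using binary_word_cases[OF bin, of "i+(L-1)"] binary_word_cases[OF bin, of "j+(L-1)"] by auto
  qed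
  have dm: "x (j+1+k) = x (i+1+k)" if "k < L - 2" for k
    using Pm[of "Suc k"] Pm[of "Suc (Suc k)"] that D[of "Suc k"] by simp
  have "j + (L-2) + 1 = j + (L-1)" "i + (L-2) + 1 = i + (L-1)" using L2 by simp_all
  then show ?thesis unfolding framed_def using L2 d0 dL dm by (simp only:) simp
qed

lemma unbalanced_imp_framed:
  assumes bin: "binary_word x"
  shows "weight x j L + 2 \<le> weight x i L \<Longrightarrow> \<exists>n s1 s2. n + 2 \<le> L \<and> framed x n s1 s2"
proof (induction L arbitrary: i j rule: less_induct)
  case (less L)
  show ?case
  proof (cases "\<forall>a b. a \<le> b \<longrightarrow> b \<le> L \<longrightarrow> b - a < L \<longrightarrow>
      weight x (i+a) (b-a) \<le> weight x (j+a) (b-a) + 1 \<and>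
      weight x (j+a) (b-a) \<le> weight x (i+a) (b-a) + 1")
    case True
    then have "L \<ge> 2 \<and> framed x (L-2) j i"
      using framed_of_minimal_weight_gap[OF bin less.prems] by blast
    then show ?thesis by (metis le_add_diff_inverse2 order_refl)
  next
    case False
    then obtain a b where ab: "a \<le> b" "b \<le> L" "b - a < L" and
      "\<not> (weight x (i+a) (b-a) \<le> weight x (j+a) (b-a) + 1 \<and>
          weight x (j+a) (b-a) \<le> weight x (i+a) (b-a) + 1)" by blast
    then consider "weight x (j+a) (b-a) + 2 \<le> weight x (i+a) (b-a)"
      | "weight x (i+a) (b-a) + 2 \<le> weight x (j+a) (b-a)" by linarith
    then obtain n s1 s2 where "n + 2 \<le> b - a" "framed x n s1 s2"
      by cases (use less.IH[OF ab(3)] in blast)+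
    then show ?thesis using ab by (meson diff_le_self le_trans)
  qed
qed

lemma sum_reverse_prefix:
  fixes k n :: nat
  assumes "\<And>q. q < k \<Longrightarrow> c q = c (n-1-q)" and "k \<le> n"
  shows "(\<Sum>q<k. c (n-k+q)) = (\<Sum>q<k. c q)"
proof -
  have "(\<Sum>q<k. c (n-k+q)) = (\<Sum>q<k. c (k - Suc q))"
  proof (rule sum.cong)
    fix q assume "q \<in> {..<k}"
    then have "c (k - Suc q) = c (n - 1 - (k - Suc q))" "n - 1 - (k - Suc q) = n - k + q"
      using assms by auto
    then show "c (n-k+q) = c (k - Suc q)" by simp
  qed simp
  also have "\<dots> = (\<Sum>q<k. c q)" by (rule sum.nat_diff_reindex)
  finally show ?thesis .
qed

lemma rev_factor_at_eq_iff:
  "rev (factor_at x s n) = factor_at x s n \<longleftrightarrow> (\<forall>k<n. x (s+k) = x (s+(n-1-k)))"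
  by (auto simp: list_eq_iff_nth_eq rev_nth)

text \<open>Let k be the first index where w and its reverse differ. Depending on w_k, the windows
  0 w_0..w_k and w_(n-1-k)..w_(n-1) 1, or 1 w_0..w_k and w_(n-1-k)..w_(n-1) 0, of length k + 2
  differ in weight by 2, so there would be a shorter framed pair.\<close>
lemma minimal_framed_palindrome:
  assumes bin: "binary_word x" and p: "framed x n s1 s2"
    and minimal: "\<forall>n'<n. \<forall>a b. \<not> framed x n' a b"
  shows "rev (factor_at x (s1+1) n) = factor_at x (s1+1) n"
  unfolding rev_factor_at_eq_iff
proof (rule ccontr)
  define c where "c q = x (s1+1+q)" for q
  assume "\<not> (\<forall>k<n. x (s1+1+k) = x (s1+1+(n-1-k)))"
  then have "\<exists>k. k < n \<and> c k \<noteq> c (n-1-k)" unfolding c_def by auto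
  then obtain k where k: "k < n" "c k \<noteq> c (n-1-k)"
    and kmin: "\<forall>q<k. \<not> (q < n \<and> c q \<noteq> c (n-1-q))"
    using exists_least_iff[of "\<lambda>k. k < n \<and> c k \<noteq> c (n-1-k)"] by blast
  have c01: "c q = 0 \<or> c q = 1" for q unfolding c_def by (rule binary_word_cases[OF bin])
  have s2c: "x (s2+1+q) = c q" if "q < n" for q using p that unfolding framed_def c_def by auto
  define S where "S = (\<Sum>q<k. c q)"
  have Srev: "(\<Sum>q<k. c (n-k+q)) = S"
    unfolding S_def using kmin k(1) by (intro sum_reverse_prefix) auto
  have no_gap: False if gap: "weight x j (Suc (Suc k)) + 2 \<le> weight x i (Suc (Suc k))" for i j
  proof -
    obtain n' a b where "n' + 2 \<le> Suc (Suc k)" "framed x n' a b"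
      using unbalanced_imp_framed[OF bin gap] by blast
    then show False using minimal k(1) by auto
  qed
  have frame: "x s1 = 0" "x (s1+n+1) = 0" "x s2 = 1" "x (s2+n+1) = 1"
    using p unfolding framed_def by auto
  show False
  proof (cases "c k = 0")
    case True
    then have ck1: "c (n-1-k) = 1" using k(2) c01 by metis
    have W1: "weight x s1 (Suc (Suc k)) = S"
      unfolding weight_Suc_Suc S_def using frame True unfolding c_def by simp
    define t where "t = s2 + 1 + (n-1-k)"
    have "x t = 1" unfolding t_def using s2c[of "n-1-k"] ck1 k(1) by simp
    moreover have "(\<Sum>q<k. x (t+1+q)) = S"
    proof -
      have "(\<Sum>q<k. x (t+1+q)) = (\<Sum>q<k. c (n-k+q))"
      proof (rule sum.cong)
        fix q assume "q \<in> {..<k}"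
        then have e: "t+1+q = s2+1+(n-k+q)" and l: "n-k+q < n" using k(1) unfolding t_def by auto
        show "x (t+1+q) = c (n-k+q)" unfolding e by (rule s2c[OF l])
      qed simp
      then show ?thesis using Srev by simp
    qed
    moreover have "t+1+k = s2+n+1" using k(1) unfolding t_def by simp
    ultimately have "weight x t (Suc (Suc k)) = S + 2" using frame unfolding weight_Suc_Suc by simp
    then show False using no_gap[of s1 t] W1 by simp
  next
    case False
    then have ck: "c k = 1" using c01 by metis
    then have ck1: "c (n-1-k) = 0" using k(2) c01 by metis
    have "(\<Sum>q<k. x (s2+1+q)) = S" unfolding S_def using s2c k(1) by (intro sum.cong) auto
    then have W2: "weight x s2 (Suc (Suc k)) = S + 2"
      unfolding weight_Suc_Suc using frame ck s2c[of k] k(1) by simp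
    define t where "t = s1 + 1 + (n-1-k)"
    have "x t = 0" unfolding t_def using ck1 unfolding c_def by simp
    moreover have "(\<Sum>q<k. x (t+1+q)) = S"
    proof -
      have "(\<Sum>q<k. x (t+1+q)) = (\<Sum>q<k. c (n-k+q))"
      proof (rule sum.cong)
        fix q assume "q \<in> {..<k}"
        then have "t+1+q = s1+1+(n-k+q)" using k(1) unfolding t_def by auto
        then show "x (t+1+q) = c (n-k+q)" unfolding c_def by (simp only:)
      qed simp
      then show ?thesis using Srev by simp
    qed
    moreover have "t+1+k = s1+n+1" using k(1) unfolding t_def by simp
    ultimately have "weight x t (Suc (Suc k)) = S" using frame unfolding weight_Suc_Suc by simp
    then show False using no_gap[of t s2] W2 by simp
  qed
qed

locale sturmian =
  fixes x :: "nat \<Rightarrow> nat"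
  assumes binary: "binary_word x" and sturmian: "sturmian_word x"
begin

lemma finite_factors: "finite (factors x n)"
  using sturmian by (simp add: sturmian_word_def)

lemma card_factors: "card (factors x n) = n + 1"
  using sturmian by (simp add: sturmian_word_def)

lemma letter_cases: "x a = 0 \<or> x a = 1"
  by (rule binary_word_cases[OF binary])

lemma recurs: "\<exists>s\<ge>T. factor_at x s l = factor_at x q l"
  by (rule sturmian_factor_recurs[OF finite_factors card_factors])

end

locale sturmian_framed = sturmian +
  fixes n s1 s2 :: nat
  assumes framed: "framed x n s1 s2"
    and palindrome: "rev (factor_at x (s1+1) n) = factor_at x (s1+1) n"
begin

definition w :: "nat list" where "w = factor_at x (s1+1) n"

definition occurs_at :: "nat \<Rightarrow> bool" where "occurs_at t \<longleftrightarrow> factor_at x t n = w"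

lemma frame_letters: "x s1 = 0" "x (s1+1+n) = 0" "x s2 = 1" "x (s2+1+n) = 1"
  using framed unfolding framed_def by (auto simp: ac_simps)

lemma occurs_at_s1: "occurs_at (s1+1)"
  by (simp add: occurs_at_def w_def)

lemma occurs_at_s2: "occurs_at (s2+1)"
  using framed unfolding occurs_at_def w_def framed_def factor_at_eq_iff by auto

lemma occurs_at_nth: "occurs_at t \<Longrightarrow> k < n \<Longrightarrow> x (t+k) = x (s1+1+k)"
  unfolding occurs_at_def w_def factor_at_eq_iff by blast

lemma w_right_special: "w @ [0] \<in> factors x (Suc n)" "w @ [1] \<in> factors x (Suc n)"
proof -
  have "factor_at x (s1+1) n = w \<and> x (s1+1+n) = 0"
    using occurs_at_s1 frame_letters unfolding occurs_at_def by simp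
  then show "w @ [0] \<in> factors x (Suc n)" unfolding snoc_in_factors_iff by blast
  have "factor_at x (s2+1) n = w \<and> x (s2+1+n) = 1"
    using occurs_at_s2 frame_letters unfolding occurs_at_def by simp
  then show "w @ [1] \<in> factors x (Suc n)" unfolding snoc_in_factors_iff by blast
qed

lemma next_letter_determined:
  assumes "factor_at x a n = factor_at x b n" "factor_at x a n \<noteq> w"
  shows "x (a+n) = x (b+n)"
proof (rule ccontr)
  assume ne: "x (a+n) \<noteq> x (b+n)"
  let ?v = "factor_at x a n"
  have "?v @ [x (a+n)] \<in> factors x (Suc n)"
    using factor_at_in_factors[of x a "Suc n"] by (simp only: factor_at_Suc)
  moreover have "?v @ [x (b+n)] \<in> factors x (Suc n)"
    using factor_at_in_factors[of x b "Suc n"] assms(1) by (simp only: factor_at_Suc)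
  ultimately have "?v @ [0] \<in> factors x (Suc n) \<and> ?v @ [1] \<in> factors x (Suc n)"
    using ne letter_cases[of "a+n"] letter_cases[of "b+n"] by auto
  then have "?v = w"
    using sturmian_right_special_unique[OF finite_factors card_factors] w_right_special by blast
  then show False using assms(2) by simp
qed

lemma agree_until_occurrence:
  assumes "factor_at x a n = factor_at x b n" "\<And>j. j < k \<Longrightarrow> \<not> occurs_at (a+j)"
  shows "\<forall>q<k+n. x (a+q) = x (b+q)"
  using assms(2)
proof (induction k)
  case 0
  then show ?case using assms(1) by (simp add: factor_at_eq_iff)
next
  case (Suc k)
  then have IH: "\<forall>q<k+n. x (a+q) = x (b+q)" by simp
  have "factor_at x (a+k) n = factor_at x (b+k) n"
    unfolding factor_at_eq_iff using IH by (simp add: add.assoc)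
  moreover have "factor_at x (a+k) n \<noteq> w" using Suc.prems[of k] by (simp add: occurs_at_def)
  ultimately have "x (a+k+n) = x (b+k+n)" by (rule next_letter_determined)
  then show ?case using IH by (auto simp: less_Suc_eq add.assoc)
qed

text \<open>Equal windows stay equal until one of them reaches an occurrence of w, the only factor of
  length n with two right extensions.\<close>
lemma occurrence_transfer:
  assumes eq: "factor_at x a n = factor_at x b n"
    and none: "\<And>j. j < k \<Longrightarrow> \<not> occurs_at (a+j)" and occ: "occurs_at (b+k)"
  shows "occurs_at (a+k)" "\<forall>q<k+n. x (a+q) = x (b+q)"
proof -
  show agree: "\<forall>q<k+n. x (a+q) = x (b+q)" by (rule agree_until_occurrence[OF eq none])
  have "factor_at x (a+k) n = factor_at x (b+k) n"
    unfolding factor_at_eq_iff using agree by (simp add: add.assoc)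
  then show "occurs_at (a+k)" using occ by (simp add: occurs_at_def)
qed

definition return_time :: "nat \<Rightarrow> nat" where
  "return_time t = (LEAST L. 0 < L \<and> occurs_at (t+L))"

lemma return_time_spec:
  assumes "occurs_at t"
  shows "0 < return_time t" "occurs_at (t + return_time t)"
    "\<And>j. 0 < j \<Longrightarrow> j < return_time t \<Longrightarrow> \<not> occurs_at (t+j)"
proof -
  obtain s where "s \<ge> t+1" "factor_at x s n = factor_at x t n" using recurs by blast
  then have "0 < s - t \<and> occurs_at (t + (s-t))" using assms unfolding occurs_at_def by auto
  then show "0 < return_time t" "occurs_at (t + return_time t)"
    unfolding return_time_def by (metis (mono_tags, lifting) LeastI)+
  fix j assume "0 < j" "j < return_time t"
  then show "\<not> occurs_at (t+j)" unfolding return_time_def using not_less_Least by blast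
qed

lemma return_time_eqI:
  assumes "occurs_at t" "0 < R" "occurs_at (t+R)" "\<And>j. 0 < j \<Longrightarrow> j < R \<Longrightarrow> \<not> occurs_at (t+j)"
  shows "return_time t = R"
  using return_time_spec[OF assms(1)] assms(2-4) by (metis linorder_neqE_nat)

lemma return_time_same_successor_le:
  assumes ot: "occurs_at t" and o\<tau>: "occurs_at \<tau>" and nx: "x (t+n) = x (\<tau>+n)"
    and le: "return_time \<tau> \<le> return_time t"
  shows "return_time t = return_time \<tau> \<and> x (t + return_time t - 1) = x (\<tau> + return_time \<tau> - 1)"
proof -
  define R where "R = return_time \<tau>"
  have R: "0 < R" "occurs_at (\<tau>+R)" using return_time_spec[OF o\<tau>] unfolding R_def by auto
  have succ: "factor_at x (t+1) n = factor_at x (\<tau>+1) n"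
    unfolding factor_at_eq_iff
  proof (intro allI impI)
    fix q assume "q < n"
    show "x (t+1+q) = x (\<tau>+1+q)"
    proof (cases "Suc q < n")
      case True
      then show ?thesis using occurs_at_nth[OF ot True] occurs_at_nth[OF o\<tau> True] by simp
    next
      case False
      then have "q = n - 1" using \<open>q<n\<close> by simp
      then show ?thesis using nx \<open>q<n\<close> by simp
    qed
  qed
  have none: "\<not> occurs_at (t+1+j)" if "j < R - 1" for j
    using return_time_spec(3)[OF ot, of "1+j"] that le unfolding R_def by (simp add: add.assoc)
  have "occurs_at (\<tau>+1+(R-1))" using R by simp
  note transfer = occurrence_transfer[OF succ none this]
  have "occurs_at (t+R)" using transfer(1) R by (simp add: add.assoc)
  then have RR: "return_time t = R"
    using return_time_spec(3)[OF ot, of R] le R(1) unfolding R_def by (metis nat_less_le)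
  have "x (t + R - 1) = x (\<tau> + R - 1)"
  proof (cases "R = 1")
    case True
    then show ?thesis
      using nx occurs_at_nth[OF ot, of 0] occurs_at_nth[OF o\<tau>, of 0] by (cases "n = 0") auto
  next
    case False
    then have "R - 2 < R - 1 + n" "t+1+(R-2) = t + R - 1" "\<tau>+1+(R-2) = \<tau> + R - 1"
      using R(1) by auto
    then show ?thesis using transfer(2) by metis
  qed
  then show ?thesis using RR unfolding R_def by simp
qed

lemma return_time_same_successor:
  assumes "occurs_at t" "occurs_at \<tau>" "x (t+n) = x (\<tau>+n)"
  shows "return_time t = return_time \<tau> \<and> x (t + return_time t - 1) = x (\<tau> + return_time \<tau> - 1)"
  using return_time_same_successor_le[OF assms] return_time_same_successor_le[OF assms(2,1)] assms(3)
  by (metis nat_le_linear)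

lemma last_occurrence_before:
  assumes "occurs_at t0" "occurs_at t'" "t0 < t'"
  shows "\<exists>t. occurs_at t \<and> t0 \<le> t \<and> t' = t + return_time t"
proof -
  define S where "S = {t. t0 \<le> t \<and> t < t' \<and> occurs_at t}"
  define t where "t = Max S"
  have fS: "finite S" unfolding S_def by (rule finite_subset[of _ "{..<t'}"]) auto
  have "t0 \<in> S" using assms unfolding S_def by auto
  then have t: "t \<in> S" using fS unfolding t_def by (intro Max_in) auto
  have later: "\<not> occurs_at j" if "t < j" "j < t'" for j
  proof
    assume "occurs_at j"
    then have "j \<in> S" using that t unfolding S_def by auto
    then show False using Max_ge[OF fS, of j] that(1) unfolding t_def by simp
  qed
  have "return_time t = t' - t"
    by (rule return_time_eqI) (use t later assms(2) in \<open>auto simp: S_def\<close>)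
  then show ?thesis using t unfolding S_def by auto
qed

definition occ_followed_by :: "nat \<Rightarrow> nat" where
  "occ_followed_by a = (if a = 0 then s1+1 else s2+1)"

definition return_of :: "nat \<Rightarrow> nat" where
  "return_of a = return_time (occ_followed_by a)"

definition return_letter :: "nat \<Rightarrow> nat" where
  "return_letter a = x (occ_followed_by a + return_of a - 1)"

lemma occurs_at_followed_by: "occurs_at (occ_followed_by a)"
  using occurs_at_s1 occurs_at_s2 by (simp add: occ_followed_by_def)

lemma followed_by_letter: "a \<le> 1 \<Longrightarrow> x (occ_followed_by a + n) = a"
  using frame_letters by (cases "a = 0") (auto simp: occ_followed_by_def ac_simps)

lemma return_time_eq_return_of:
  assumes "occurs_at t"
  shows "return_time t = return_of (x (t+n)) \<and> x (t + return_time t - 1) = return_letter (x (t+n))"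
proof -
  have "x (t+n) \<le> 1" using letter_cases[of "t+n"] by auto
  then have nx: "x (t+n) = x (occ_followed_by (x (t+n)) + n)" using followed_by_letter by simp
  show ?thesis unfolding return_of_def return_letter_def
    by (rule return_time_same_successor[OF assms occurs_at_followed_by nx])
qed

lemma return_letters_differ: "return_letter 0 \<noteq> return_letter 1"
proof -
  have attained: "\<exists>a. return_letter a = c" if sc: "x sc = c" "occurs_at (sc+1)" for c sc
  proof -
    obtain s where s: "s \<ge> s1+1+1" "factor_at x s (Suc n) = factor_at x sc (Suc n)"
      using recurs by blast
    then have "x s = c" "occurs_at (s+1)" using sc unfolding factor_at_Cons occurs_at_def by auto
    moreover obtain t where "occurs_at t" "s + 1 = t + return_time t"
      using last_occurrence_before[OF occurs_at_s1 \<open>occurs_at (s+1)\<close>] s(1) by auto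
    ultimately show ?thesis using return_time_eq_return_of by (metis add_diff_cancel_right')
  qed
  obtain a0 where a0: "return_letter a0 = 0" using attained[of s1 0] frame_letters occurs_at_s1 by auto
  obtain a1 where a1: "return_letter a1 = 1" using attained[of s2 1] frame_letters occurs_at_s2 by auto
  have "return_letter a = return_letter (if a = 0 then 0 else 1)" for a
    by (simp add: return_letter_def return_of_def occ_followed_by_def)
  then show ?thesis using a0 a1 by (metis zero_neq_one)
qed

lemma inj_on_return_window:
  assumes o\<tau>: "occurs_at \<tau>"
  shows "inj_on (\<lambda>j. factor_at x (\<tau>+j) n) {..<return_time \<tau>}"
proof -
  define R where "R = return_time \<tau>"
  have R: "occurs_at (\<tau>+R)" "\<And>j. 0 < j \<Longrightarrow> j < R \<Longrightarrow> \<not> occurs_at (\<tau>+j)"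
    using return_time_spec[OF o\<tau>] unfolding R_def by auto
  have no_repeat: False if ab: "a < b" "b < R" "factor_at x (\<tau>+a) n = factor_at x (\<tau>+b) n" for a b
  proof (cases "a = 0")
    case True
    then have "occurs_at (\<tau>+b)" using ab(3) o\<tau> unfolding occurs_at_def by simp
    then show False using R(2)[of b] ab by simp
  next
    case False
    have none: "\<not> occurs_at (\<tau>+a+j)" if "j < R - b" for j
    proof -
      have "\<not> occurs_at (\<tau>+(a+j))" by (rule R(2)) (use False that ab in auto)
      then show ?thesis by (simp add: add.assoc)
    qed
    have "occurs_at (\<tau>+b+(R-b))" using R(1) ab by simp
    then have "occurs_at (\<tau>+(a+(R-b)))"
      using occurrence_transfer(1)[OF ab(3) none] by (simp add: add.assoc)
    moreover have "\<not> occurs_at (\<tau>+(a+(R-b)))" by (rule R(2)) (use False ab in auto)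
    ultimately show False by contradiction
  qed
  show ?thesis
  proof (rule inj_onI)
    fix a b assume "a \<in> {..<return_time \<tau>}" "b \<in> {..<return_time \<tau>}"
      and eq: "factor_at x (\<tau>+a) n = factor_at x (\<tau>+b) n"
    then have "a < R" "b < R" unfolding R_def by auto
    then show "a = b"
      using no_repeat[of a b] no_repeat[of b a] eq by (cases a b rule: linorder_cases) auto
  qed
qed

text \<open>Equal windows inside two returns stay equal up to the end of the shorter remaining
  part, where an occurrence of w forces the other return to end as well.\<close>
lemma common_return_window:
  assumes o\<tau>: "occurs_at \<tau>" and o\<tau>': "occurs_at \<tau>'"
    and j: "0 < j" "j < return_time \<tau>" and j': "0 < j'" "j' < return_time \<tau>'"
    and eq: "factor_at x (\<tau>'+j') n = factor_at x (\<tau>+j) n"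
    and le: "return_time \<tau> - j \<le> return_time \<tau>' - j'"
  shows "x (\<tau> + return_time \<tau> - 1) = x (\<tau>' + return_time \<tau>' - 1)"
proof -
  define R where "R = return_time \<tau>"
  define R' where "R' = return_time \<tau>'"
  define k where "k = R - j"
  have R: "occurs_at (\<tau>+R)" using return_time_spec[OF o\<tau>] unfolding R_def by auto
  have R': "\<And>i. 0 < i \<Longrightarrow> i < R' \<Longrightarrow> \<not> occurs_at (\<tau>'+i)"
    using return_time_spec[OF o\<tau>'] unfolding R'_def by auto
  have k1: "k \<ge> 1" and jk: "j + k = R" and jk': "j' + k \<le> R'"
    using j j' le unfolding k_def R_def R'_def by auto
  have none: "\<not> occurs_at (\<tau>'+j'+i)" if "i < k" for i
    using R'[of "j'+i"] that j' jk' by (simp add: add.assoc)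
  have "occurs_at (\<tau>+j+k)" using R jk by (simp add: add.assoc)
  note transfer = occurrence_transfer[OF eq none this]
  have "occurs_at (\<tau>'+(j'+k))" using transfer(1) by (simp add: add.assoc)
  then have "\<not> j' + k < R'" using R'[of "j'+k"] j' by auto
  then have "j' + k = R'" using jk' by simp
  moreover have "k - 1 < k + n" using k1 by simp
  then have "x (\<tau>'+j'+(k-1)) = x (\<tau>+j+(k-1))" using transfer(2) by blast
  ultimately show ?thesis using k1 jk unfolding R_def R'_def by (simp add: add.assoc)
qed

text \<open>The windows of length n met on the two returns are factors, distinct along each return,
  and the returns share no window other than w, since their last letters differ.\<close>
lemma return_of_sum_le: "return_of 0 + return_of 1 \<le> n + 2"
proof -
  define A where "A a = (\<lambda>j. factor_at x (occ_followed_by a + j) n) ` {..<return_of a}" for a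
  have cA: "card (A a) = return_of a" for a
    unfolding A_def return_of_def
    using inj_on_return_window[OF occurs_at_followed_by[of a]] by (simp add: card_image)
  have fA: "finite (A a)" for a unfolding A_def by auto
  have "A 0 \<union> A 1 \<subseteq> factors x n" unfolding A_def by auto
  then have "card (A 0 \<union> A 1) \<le> card (factors x n)" using finite_factors by (intro card_mono) auto
  then have cU: "card (A 0 \<union> A 1) \<le> n + 1" using card_factors by simp
  have "A 0 \<inter> A 1 \<subseteq> {w}"
  proof
    fix v assume "v \<in> A 0 \<inter> A 1"
    then obtain j0 j1 where j0: "j0 < return_of 0" "v = factor_at x (occ_followed_by 0 + j0) n"
      and j1: "j1 < return_of 1" "v = factor_at x (occ_followed_by 1 + j1) n"
      unfolding A_def by auto
    show "v \<in> {w}"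
    proof (cases "j0 = 0 \<or> j1 = 0")
      case True
      then show ?thesis using j0 j1 occurs_at_followed_by[of 0] occurs_at_followed_by[of 1]
        unfolding occurs_at_def by auto
    next
      case False
      then have pos: "0 < j0" "0 < j1" by auto
      have "return_letter 0 = return_letter 1"
      proof (cases "return_of 0 - j0 \<le> return_of 1 - j1")
        case True
        then show ?thesis
          using common_return_window[OF occurs_at_followed_by[of 0] occurs_at_followed_by[of 1], of j0 j1] j0 j1 pos
          unfolding return_letter_def return_of_def by auto
      next
        case False
        then show ?thesis
          using common_return_window[OF occurs_at_followed_by[of 1] occurs_at_followed_by[of 0], of j1 j0] j0 j1 pos
          unfolding return_letter_def return_of_def by auto
      qed
      then show ?thesis using return_letters_differ by simp
    qed
  qed
  then have "card (A 0 \<inter> A 1) \<le> 1" using card_mono[of "{w}"] by fastforce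
  then show ?thesis using card_Un_Int[OF fA[of 0] fA[of 1]] cA[of 0] cA[of 1] cU by linarith
qed

text \<open>A return of length at most n + 1 overlaps the next occurrence of the palindrome w, so
  its last letter mirrors the letter following w.\<close>
lemma short_return_letter:
  assumes a: "a \<le> 1" and le: "return_of a \<le> n + 1"
  shows "return_letter a = a"
proof -
  define R where "R = return_of a"
  have R: "0 < R" "occurs_at (occ_followed_by a + R)"
    using return_time_spec[OF occurs_at_followed_by[of a]] unfolding R_def return_of_def by auto
  show ?thesis
  proof (cases "R = n + 1")
    case True
    then show ?thesis
      unfolding return_letter_def R_def[symmetric] using followed_by_letter[OF a] by simp
  next
    case False
    then have Rn: "R - 1 < n" "n - R < n" "n - 1 - (R - 1) = n - R" using le R(1)
      unfolding R_def by auto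
    have "return_letter a = x (s1+1+(R-1))"
      using occurs_at_nth[OF occurs_at_followed_by Rn(1), of a] R(1)
      unfolding return_letter_def R_def[symmetric] by (simp add: add.assoc)
    also have "\<dots> = x (s1+1+(n-R))"
      using palindrome Rn unfolding rev_factor_at_eq_iff by metis
    also have "\<dots> = x (occ_followed_by a + R + (n-R))"
      using occurs_at_nth[OF R(2) Rn(2)] by simp
    also have "\<dots> = a" using followed_by_letter[OF a] Rn by simp
    finally show ?thesis .
  qed
qed

lemma return_letter_id: "a \<le> 1 \<Longrightarrow> return_letter a = a"
proof -
  have b: "return_letter a \<le> 1" for a
    unfolding return_letter_def using letter_cases[of "occ_followed_by a + return_of a - 1"] by auto
  have "return_letter 0 = 0 \<and> return_letter 1 = 1"
  proof (cases "return_of 0 \<le> n + 1")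
    case True
    then show ?thesis using short_return_letter[of 0] return_letters_differ b[of 1] by simp
  next
    case False
    then have "return_of 1 \<le> n + 1" using return_of_sum_le by linarith
    then show ?thesis using short_return_letter[of 1] return_letters_differ b[of 0] by simp
  qed
  then show "a \<le> 1 \<Longrightarrow> return_letter a = a" by (cases a) auto
qed

text \<open>Of 0 w 1 and 1 w 0 at most one occurs: otherwise 0 w and 1 w would both be right special.\<close>
lemma some_cross_frame_missing: "\<exists>a\<le>1. [a] @ w @ [1-a] \<notin> factors x (Suc (Suc n))"
proof (rule ccontr)
  assume "\<not> ?thesis"
  then have both: "[0] @ w @ [1] \<in> factors x (Suc (Suc n))" "[1] @ w @ [0] \<in> factors x (Suc (Suc n))"
    by auto
  have "[0] @ w @ [0] \<in> factors x (Suc (Suc n))"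
    unfolding framed_in_factors_iff using frame_letters occurs_at_s1
    unfolding occurs_at_def by auto
  moreover have "[1] @ w @ [1] \<in> factors x (Suc (Suc n))"
    unfolding framed_in_factors_iff using frame_letters occurs_at_s2
    unfolding occurs_at_def by auto
  ultimately have "[0] @ w = [1] @ w"
    by (intro sturmian_right_special_unique[OF finite_factors card_factors]) (use both in simp_all)
  then show False by simp
qed

text \<open>If a w (1 - a) never occurs, an occurrence of w preceded by a is followed by a, and the
  return letter passes the a on to the next occurrence.\<close>
lemma preceding_letter_persists:
  assumes a: "a \<le> 1" "[a] @ w @ [1-a] \<notin> factors x (Suc (Suc n))"
    and t0: "occurs_at t0" "1 \<le> t0" "x (t0-1) = a"
  shows "t0 \<le> t' \<Longrightarrow> occurs_at t' \<Longrightarrow> x (t'-1) = a"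
proof (induction t' rule: less_induct)
  case (less t')
  show ?case
  proof (cases "t' = t0")
    case False
    then obtain t where t: "occurs_at t" "t0 \<le> t" "t' = t + return_time t"
      using last_occurrence_before[OF t0(1) less.prems(2)] less.prems(1) by auto
    then have "t < t'" using return_time_spec(1)[OF t(1)] by simp
    then have xt: "x (t-1) = a" using less.IH t(1,2) by simp
    have "x (t+n) = a"
    proof (rule ccontr)
      assume "x (t+n) \<noteq> a"
      then have "x (t+n) = 1 - a" using letter_cases[of "t+n"] a(1) by auto
      moreover have "t - 1 + 1 = t" using t(2) t0(2) by simp
      ultimately have "\<exists>s. x s = a \<and> factor_at x (s+1) n = w \<and> x (s+1+n) = 1-a"
        using xt t(1) unfolding occurs_at_def by metis
      then show False using a(2) unfolding framed_in_factors_iff by blast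
    qed
    moreover have "t' - 1 = t + return_time t - 1" using t(3) by simp
    ultimately show ?thesis
      using conjunct2[OF return_time_eq_return_of[OF t(1)]] return_letter_id[OF a(1)]
      by (simp only:)
  qed (use t0 in simp)
qed

theorem inconsistent: False
proof -
  obtain a where a: "a \<le> 1" "[a] @ w @ [1-a] \<notin> factors x (Suc (Suc n))"
    using some_cross_frame_missing by blast
  obtain sa where sa: "x sa = a" "occurs_at (sa+1)"
    using a(1) frame_letters occurs_at_s1 occurs_at_s2 by (cases a) auto
  obtain sb where sb: "x sb = 1-a" "occurs_at (sb+1)"
    using a(1) frame_letters occurs_at_s1 occurs_at_s2 by (cases a) auto
  obtain s where s: "s \<ge> 1" "factor_at x s (Suc n) = factor_at x sa (Suc n)"
    using recurs by blast
  then have s': "x s = a" "occurs_at (s+1)" using sa unfolding factor_at_Cons occurs_at_def by auto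
  obtain s' where s2: "s' \<ge> s+1" "factor_at x s' (Suc n) = factor_at x sb (Suc n)"
    using recurs by blast
  then have "x s' = 1-a" "occurs_at (s'+1)" using sb unfolding factor_at_Cons occurs_at_def by auto
  moreover have "x (s'+1-1) = a"
    using preceding_letter_persists[OF a, of "s+1" "s'+1"] s' s2(1) calculation(2) by simp
  ultimately show False using a(1) by (cases a) auto
qed

end

theorem sturmian_balanced:
  assumes "binary_word x" "sturmian_word x"
  shows "balanced_with x 1"
  unfolding balanced_with_def
proof (intro allI, rule ccontr)
  fix i j L
  assume "\<not> weight x j L \<le> weight x i L + 1"
  then have "weight x i L + 2 \<le> weight x j L" by simp
  then have ex: "\<exists>n s1 s2. framed x n s1 s2" using unbalanced_imp_framed[OF assms(1)] by blast
  define n0 where "n0 = (LEAST n. \<exists>s1 s2. framed x n s1 s2)"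
  obtain s1 s2 where framed: "framed x n0 s1 s2"
    using LeastI_ex[OF ex] unfolding n0_def by blast
  have minimal: "\<forall>n'<n0. \<forall>a b. \<not> framed x n' a b"
    unfolding n0_def using not_less_Least by blast
  interpret sturmian_framed x n0 s1 s2
    using assms framed minimal_framed_palindrome[OF assms(1) framed minimal]
    by unfold_locales auto
  show False by (rule inconsistent)
qed

text \<open>Averaging the balance inequality over q consecutive blocks of length L compares the window
  with the prefix of length q L, whose average density tends to the slope.\<close>
lemma balanced_imp_bounded_discrepancy:
  assumes bal: "balanced_with x C" and sl: "has_slope x \<alpha>"
  shows "\<bar>real (weight x i L) - real L * \<alpha>\<bar> \<le> real C"
proof (cases "L = 0")
  case False
  define A where "A = real (weight x i L)"
  define f where "f q = real (weight x 0 (q*L)) / real (q*L)" for q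
  have "(\<lambda>q. (\<Sum>k<q*L. real (x k)) / real (q*L)) \<longlonglongrightarrow> \<alpha>"
    using LIMSEQ_subseq_LIMSEQ[OF sl[unfolded has_slope_def], of "\<lambda>q. q*L"] False
    by (simp add: strict_mono_def comp_def)
  then have "f \<longlonglongrightarrow> \<alpha>" unfolding f_def weight_def by simp
  then have lim: "(\<lambda>q. \<bar>f q - A / L\<bar>) \<longlonglongrightarrow> \<bar>\<alpha> - A / L\<bar>"
    by (intro tendsto_intros)
  have block: "\<bar>real (weight x 0 (q*L)) - real q * A\<bar> \<le> real q * C" for q
  proof -
    have "weight x 0 (q*L) \<le> (\<Sum>r<q. weight x i L + C)"
      unfolding weight_mult by (rule sum_mono) (use bal in \<open>auto simp: balanced_with_def\<close>)
    moreover have "(\<Sum>r<q. weight x i L) \<le> (\<Sum>r<q. weight x (0 + r*L) L + C)"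
      by (rule sum_mono) (use bal in \<open>auto simp: balanced_with_def\<close>)
    ultimately have "real (weight x 0 (q*L)) \<le> real (q * weight x i L + q * C)"
      "real (q * weight x i L) \<le> real (weight x 0 (q*L) + q * C)"
      unfolding weight_mult of_nat_le_iff by (simp_all add: sum.distrib distrib_left)
    then show ?thesis unfolding A_def abs_le_iff by (simp add: algebra_simps)
  qed
  have "\<bar>f q - A / L\<bar> \<le> C / L" if "q \<ge> 1" for q
  proof -
    have "\<bar>f q - A / L\<bar> = \<bar>real (weight x 0 (q*L)) - real q * A\<bar> / (real q * L)"
      using that False by (simp add: f_def field_simps)
    also have "\<dots> \<le> real q * C / (real q * L)"
      using block that by (intro divide_right_mono) auto
    finally show ?thesis using that by simp
  qed
  then have "\<bar>\<alpha> - A / L\<bar> \<le> C / L"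
    by (intro LIMSEQ_le_const2[OF lim]) auto
  then have "\<bar>\<alpha> - A / L\<bar> * L \<le> C" using False by (simp add: field_simps)
  moreover have "\<bar>\<alpha> - A / L\<bar> * L = \<bar>A - L * \<alpha>\<bar>"
    using False by (simp add: abs_mult[symmetric] field_simps abs_minus_commute)
  ultimately show ?thesis unfolding A_def by simp
qed simp

lemma periodic_balanced:
  assumes bin: "binary_word x" and p: "p > 0" "\<forall>i. x (i + p) = x i"
  shows "balanced_with x p"
proof -
  have const: "weight x i p = weight x 0 p" for i
  proof (induction i)
    case (Suc i)
    have "weight x i (Suc p) = weight x i p + x (i+p)" by (rule weight_Suc)
    moreover have "weight x i (Suc p) = x i + weight x (Suc i) p"
      unfolding weight_Suc_Cons by (simp add: weight_def)
    moreover have "x (i+p) = x i" using p(2) by blast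
    ultimately show ?case using Suc.IH by linarith
  qed simp
  have bnd: "(L div p) * weight x 0 p \<le> weight x i L \<and> weight x i L < (L div p) * weight x 0 p + p"
    for i L
  proof -
    have "weight x i L = weight x i ((L div p) * p) + weight x (i + (L div p)*p) (L mod p)"
      using weight_add[of x i "(L div p) * p" "L mod p"] by simp
    moreover have "weight x i ((L div p) * p) = (\<Sum>r<L div p. weight x 0 p)"
      unfolding weight_mult by (rule sum.cong) (rule refl, rule const)
    moreover have "weight x (i + (L div p)*p) (L mod p) \<le> L mod p" by (rule weight_le[OF bin])
    moreover have "L mod p < p" using p(1) by simp
    ultimately show ?thesis by simp
  qed
  show ?thesis unfolding balanced_with_def
  proof (intro allI)
    fix i j L
    show "weight x j L \<le> weight x i L + p" using bnd[of L i] bnd[of L j] by linarith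
  qed
qed

lemma binary_word_bounded_discrepancy:
  assumes bin: "binary_word u" and word: "periodic_word u \<or> sturmian_word u" and sl: "has_slope u \<alpha>"
  shows "\<exists>C. \<forall>i L. \<bar>real (weight u i L) - real L * \<alpha>\<bar> \<le> C"
proof -
  obtain C where "balanced_with u C"
  proof (cases "periodic_word u")
    case True
    then obtain p where "p > 0" "\<forall>i. u (i + p) = u i" unfolding periodic_word_def by blast
    then show ?thesis using that periodic_balanced[OF bin] by blast
  next
    case False
    then show ?thesis using that sturmian_balanced[OF bin] word by blast
  qed
  then show ?thesis using balanced_imp_bounded_discrepancy[OF _ sl] by blast
qed

lemma has_slope_nonneg: "has_slope u \<alpha> \<Longrightarrow> \<alpha> \<ge> 0"
  unfolding has_slope_def
  by (erule LIMSEQ_le_const) (auto intro!: divide_nonneg_nonneg sum_nonneg)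

definition is_odd_var :: "gvar \<Rightarrow> bool" where
  "is_odd_var v = (case v of Y _ \<Rightarrow> True | X _ \<Rightarrow> False)"

definition odd_count :: "gvar nmon \<Rightarrow> nat" where
  "odd_count t = length (filter is_odd_var (leaves t))"

text \<open>Listing the z's in the order z_1^(1), ..., z_(m+w_1)^(1), z_1^(2), ..., the element
  z_j^(i) is the (z_offset m u (i - 1) + j)-th one.\<close>
definition z_offset :: "nat \<Rightarrow> (nat \<Rightarrow> nat) \<Rightarrow> nat \<Rightarrow> nat" where
  "z_offset m u i = (\<Sum>r<i. m + u r)"

text \<open>z_j^(i) is reached from a basis element z_j0^(i0) by d steps along the chain
  z_1^(1) -a-> ... -a-> z_(m+w_1)^(1) -b-> z_1^(2) -a-> ...; y counts the odd elements used: the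
  steps by b, plus the start if it is odd.\<close>
definition z_reachable :: "nat \<Rightarrow> (nat \<Rightarrow> nat) \<Rightarrow> nat \<Rightarrow> nat \<Rightarrow> nat \<Rightarrow> nat \<Rightarrow> bool" where
  "z_reachable m u d y i j \<longleftrightarrow> 1 \<le> j \<and> j \<le> m + u (i-1) \<and>
     (\<exists>i0 j0. 1 \<le> i0 \<and> i0 \<le> i \<and> 1 \<le> j0 \<and> j0 \<le> m + u (i0-1) \<and>
        z_offset m u (i0-1) + j0 + d = z_offset m u (i-1) + j \<and>
        y = (i - i0) + (if even i0 then 1 else 0))"

lemma z_offset_Suc: "z_offset m u (Suc i) = z_offset m u i + m + u i"
  by (simp add: z_offset_def)

lemma z_offset_add: "z_offset m u (a + d) = z_offset m u a + m * d + weight u a d"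
  by (induction d) (simp_all add: z_offset_def weight_def)

lemma z_reachable_start:
  "1 \<le> i \<Longrightarrow> 1 \<le> j \<Longrightarrow> j \<le> m + u (i-1) \<Longrightarrow> y = (if even i then 1 else 0) \<Longrightarrow>
    z_reachable m u 0 y i j"
  unfolding z_reachable_def by (intro conjI exI[of _ i] exI[of _ j]) simp_all

lemma z_reachable_mult_a:
  assumes "z_reachable m u d y i j" "j < m + u (i-1)"
  shows "z_reachable m u (Suc d) y i (j+1)"
proof -
  obtain i0 j0 where "1 \<le> i0" "i0 \<le> i" "1 \<le> j0" "j0 \<le> m + u (i0-1)"
    "z_offset m u (i0-1) + j0 + d = z_offset m u (i-1) + j"
    "y = (i - i0) + (if even i0 then 1 else 0)"
    using assms(1) unfolding z_reachable_def by blast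
  then show ?thesis unfolding z_reachable_def using assms(2)
    by (intro conjI exI[of _ i0] exI[of _ j0]) simp_all
qed

lemma z_reachable_mult_b:
  assumes r: "z_reachable m u d y i j" and j: "j = m + u (i-1)" and m: "1 \<le> m"
  shows "z_reachable m u (Suc d) (Suc y) (i+1) 1"
proof -
  obtain i0 j0 where start: "1 \<le> i0" "i0 \<le> i" "1 \<le> j0" "j0 \<le> m + u (i0-1)"
    and offset: "z_offset m u (i0-1) + j0 + d = z_offset m u (i-1) + j"
    and y: "y = (i - i0) + (if even i0 then 1 else 0)"
    using r unfolding z_reachable_def by blast
  have "z_offset m u (i+1-1) = z_offset m u (i-1) + m + u (i-1)"
    using start z_offset_Suc[of m u "i-1"] by simp
  then have "z_offset m u (i0-1) + j0 + Suc d = z_offset m u (i+1-1) + 1"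
    using offset j by simp
  moreover have "Suc y = (i + 1 - i0) + (if even i0 then 1 else 0)" using y start by simp
  ultimately show ?thesis unfolding z_reachable_def using start m
    by (intro conjI exI[of _ i0] exI[of _ j0]) simp_all
qed

lemma length_leaves_ge_1: "length (leaves t) \<ge> 1"
  by (induction t) auto

lemma supp_A_mult:
  assumes "c \<in> supp (A_mult m u v1 v2)"
  shows "\<exists>g1 g2. g1 \<in> supp v1 \<and> g2 \<in> supp v2 \<and> bprod m u g1 g2 = Some c"
proof -
  have "A_mult m u v1 v2 c \<noteq> 0" using assms unfolding supp_def by simp
  then obtain p where "p \<in> supp v1 \<times> supp v2"
    "(if bprod m u (fst p) (snd p) = Some c then v1 (fst p) * v2 (snd p) else 0) \<noteq> 0"
    unfolding A_mult_def by (rule sum.not_neutral_contains_not_neutral) blast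
  then show ?thesis by (cases p) (auto split: if_splits)
qed

lemma bprod_SomeD:
  assumes "bprod m u g1 g2 = Some c"
  shows "\<exists>i j. g1 = GZ i j \<and> ((g2 = GA \<and> j < m + u (i-1) \<and> c = GZ i (j+1)) \<or>
                               (g2 = GB \<and> j = m + u (i-1) \<and> c = GZ (i+1) 1))"
  using assms by (cases g1; cases g2) (auto split: if_splits)

lemma mon_eval_supp:
  fixes \<phi> :: "gvar \<Rightarrow> gen \<Rightarrow> 'f::field"
  assumes gs: "graded_subst m u \<phi>" and m: "1 \<le> m"
  shows "c \<in> supp (mon_eval m u \<phi> t) \<Longrightarrow>
    (c = GA \<longrightarrow> (\<exists>k. t = Var (X k))) \<and> (c = GB \<longrightarrow> (\<exists>k. t = Var (Y k))) \<and>
    (\<forall>i j. c = GZ i j \<longrightarrow> z_reachable m u (length (leaves t) - 1) (odd_count t) i j)"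
proof (induction t arbitrary: c)
  case (Var v)
  then have cv: "c \<in> supp (\<phi> v)" by simp
  show ?case
  proof (cases v)
    case (X k)
    then have "c \<in> basis_set m u" "c \<in> {GA} \<union> {GZ i j | i j. odd i}"
      using cv gs unfolding graded_subst_def A_even_def A_carrier_def by auto
    then show ?thesis
      using X by (auto simp: basis_set_def odd_count_def is_odd_var_def intro!: z_reachable_start)
  next
    case (Y k)
    then have "c \<in> basis_set m u" "c \<in> {GB} \<union> {GZ i j | i j. even i}"
      using cv gs unfolding graded_subst_def A_odd_def A_carrier_def by auto
    then show ?thesis
      using Y by (auto simp: basis_set_def odd_count_def is_odd_var_def intro!: z_reachable_start)
  qed
next
  case (Mul s t)
  obtain g1 g2 where g: "g1 \<in> supp (mon_eval m u \<phi> s)" "g2 \<in> supp (mon_eval m u \<phi> t)"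
    "bprod m u g1 g2 = Some c"
    using supp_A_mult Mul.prems by fastforce
  obtain i j where g1: "g1 = GZ i j" and cases: "(g2 = GA \<and> j < m + u (i-1) \<and> c = GZ i (j+1)) \<or>
                               (g2 = GB \<and> j = m + u (i-1) \<and> c = GZ (i+1) 1)"
    using bprod_SomeD[OF g(3)] by blast
  have r: "z_reachable m u (length (leaves s) - 1) (odd_count s) i j"
    using Mul.IH(1)[OF g(1)] g1 by blast
  have len: "length (leaves (Mul s t)) - 1 = Suc (length (leaves s) - 1)" if "length (leaves t) = 1"
    using that length_leaves_ge_1[of s] by simp
  have odd: "odd_count (Mul s t) = odd_count s + odd_count t" by (simp add: odd_count_def)
  from cases show ?case
  proof
    assume a: "g2 = GA \<and> j < m + u (i-1) \<and> c = GZ i (j+1)"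
    then obtain k where "t = Var (X k)" using Mul.IH(2)[OF g(2)] by blast
    then show ?thesis using z_reachable_mult_a[OF r] a len odd
      by (simp add: odd_count_def is_odd_var_def)
  next
    assume b: "g2 = GB \<and> j = m + u (i-1) \<and> c = GZ (i+1) 1"
    then obtain k where "t = Var (Y k)" using Mul.IH(2)[OF g(2)] by blast
    then show ?thesis using z_reachable_mult_b[OF r _ m] b len odd
      by (simp add: odd_count_def is_odd_var_def)
  qed
qed

lemma leaves_count:
  assumes "mset (leaves t) = mset (map X [1..<k+1] @ map Y [1..<l+1])"
  shows "length (leaves t) = k + l" "odd_count t = l"
proof -
  show "length (leaves t) = k + l" using mset_eq_length[OF assms] by simp
  have "odd_count t = size (filter_mset is_odd_var (mset (leaves t)))"
    unfolding odd_count_def by (metis mset_filter size_mset)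
  also have "\<dots> = length (filter is_odd_var (map X [1..<k+1] @ map Y [1..<l+1]))"
    unfolding assms by (metis mset_filter size_mset)
  also have "\<dots> = l" by (simp add: is_odd_var_def comp_def)
  finally show "odd_count t = l" .
qed

text \<open>A multilinear monomial in at least two variables can only evaluate to z's, and the odd
  variables are exactly the odd factors along the chain.\<close>
lemma P_quot_nonzero_imp_z_reachable:
  assumes P: "P_quot_nonzero TYPE('f::field) m u k l" and m: "1 \<le> m" and kl: "2 \<le> k + l"
  shows "\<exists>i j. z_reachable m u (k + l - 1) l i j"
proof -
  obtain f :: "gvar nmon \<Rightarrow> 'f" where f: "f \<in> P_space k l" "\<not> graded_identity m u f"
    using P unfolding P_quot_nonzero_def by blast
  then obtain \<phi> :: "gvar \<Rightarrow> gen \<Rightarrow> 'f" where gs: "graded_subst m u \<phi>"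
    and "poly_eval m u \<phi> f \<noteq> (\<lambda>_. 0)"
    unfolding graded_identity_def P_space_def by blast
  then obtain c where "(\<Sum>t\<in>supp f. f t * mon_eval m u \<phi> t c) \<noteq> 0"
    unfolding poly_eval_def by fastforce
  then obtain t where t: "t \<in> supp f" "f t * mon_eval m u \<phi> t c \<noteq> 0"
    by (rule sum.not_neutral_contains_not_neutral)
  have "mset (leaves t) = mset (map X [1..<k+1] @ map Y [1..<l+1])"
    using f(1) t(1) unfolding P_space_def by blast
  note count = leaves_count[OF this]
  have "c \<in> supp (mon_eval m u \<phi> t)" using t(2) unfolding supp_def by auto
  note supp = mon_eval_supp[OF gs m this]
  have "\<not> (\<exists>v. t = Var v)" using count(1) kl by auto
  then obtain i j where "c = GZ i j" using supp by (cases c) auto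
  then show ?thesis using supp count by auto
qed

text \<open>Along a chain of n - 1 steps the element index advances by about n, i.e. by about
  (m + alpha) per level; the number l of odd factors is the number of levels crossed, up to one.\<close>
lemma z_reachable_odd_count_estimate:
  assumes bin: "binary_word u" and disc: "\<forall>i L. \<bar>real (weight u i L) - real L * \<alpha>\<bar> \<le> C"
    and \<alpha>: "\<alpha> \<ge> 0" and n: "1 \<le> n" and r: "z_reachable m u (n - 1) l i1 j1"
  shows "\<bar>real l * (m + \<alpha>) - real n\<bar> \<le> real m + 1 + C + (m + \<alpha>)"
proof -
  obtain i0 j0 where start: "1 \<le> i0" "i0 \<le> i1" "1 \<le> j0" "j0 \<le> m + u (i0-1)"
    and offset: "z_offset m u (i0-1) + j0 + (n - 1) = z_offset m u (i1-1) + j1"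
    and l: "l = (i1 - i0) + (if even i0 then 1 else 0)"
    and j1: "1 \<le> j1" "j1 \<le> m + u (i1-1)"
    using r unfolding z_reachable_def by blast
  define d where "d = i1 - i0"
  define M where "M = real m + \<alpha>"
  have "i1 - 1 = (i0 - 1) + d" unfolding d_def using start by simp
  then have "j0 + (n - 1) = m * d + weight u (i0-1) d + j1"
    using offset z_offset_add[of m u "i0-1" d] by simp
  then have "real j0 + (real n - 1) = real m * real d + real (weight u (i0-1) d) + real j1"
    using n by (simp flip: of_nat_add of_nat_mult add: of_nat_diff)
  moreover have "real j0 \<le> real m + 1" "real j1 \<le> real m + 1"
    using start(4) j1(2) binary_word_le_1[OF bin, of "i0-1"] binary_word_le_1[OF bin, of "i1-1"]
    by linarith+
  moreover have "\<bar>real (weight u (i0-1) d) - real d * \<alpha>\<bar> \<le> C" using disc by blast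
  ultimately have "\<bar>real n - real d * M\<bar> \<le> real m + 1 + C"
    using start(3) j1(1) unfolding M_def abs_le_iff by (simp add: algebra_simps)
  moreover have "real l * M = real d * M \<or> real l * M = real d * M + M"
    unfolding l d_def by (auto simp: algebra_simps)
  moreover have "M \<ge> 0" using \<alpha> unfolding M_def by simp
  ultimately show ?thesis unfolding M_def[symmetric] abs_le_iff by linarith
qed

lemma ratio_close:
  fixes l n M K \<epsilon> :: real
  assumes "\<bar>l * M - n\<bar> \<le> K" "1 \<le> M" "0 < n" "K \<le> n * \<epsilon>"
  shows "\<bar>l / n - 1 / M\<bar> \<le> \<epsilon>"
proof -
  have "\<bar>l / n - 1 / M\<bar> = \<bar>l * M - n\<bar> / (n * M)"
    using assms(2,3) by (simp add: field_simps abs_divide)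
  also have "\<dots> \<le> K / (n * M)"
    using assms by (intro divide_right_mono) auto
  also have "\<dots> \<le> K / n"
    using assms by (intro divide_left_mono) (auto intro: order_trans[OF abs_ge_zero])
  also have "\<dots> \<le> \<epsilon>" using assms(3,4) by (simp add: divide_le_eq mult.commute)
  finally show ?thesis .
qed

theorem lemma2:
  fixes m :: nat and u :: "nat \<Rightarrow> nat" and \<alpha> \<beta> \<epsilon> :: real
  assumes "m \<ge> 2"
    and "binary_word u"
    and "periodic_word u \<or> sturmian_word u"
    and "has_slope u \<alpha>"
    and "\<beta> = 1 / (m + \<alpha>)"
    and "\<epsilon> > 0"
  shows "\<exists>n0. \<forall>n k. n \<ge> n0 \<and> k \<le> n \<and> P_quot_nonzero TYPE('f::field_char_0) m u k (n - k)
           \<longrightarrow> \<beta> - \<epsilon> \<le> real (n - k) / real n \<and> real (n - k) / real n \<le> \<beta> + \<epsilon>"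
proof -
  obtain C where disc: "\<forall>i L. \<bar>real (weight u i L) - real L * \<alpha>\<bar> \<le> C"
    using binary_word_bounded_discrepancy[OF assms(2-4)] by blast
  have \<alpha>: "\<alpha> \<ge> 0" by (rule has_slope_nonneg[OF assms(4)])
  define K where "K = real m + 1 + C + (m + \<alpha>)"
  show ?thesis
  proof (intro exI[of _ "max 2 (nat \<lceil>K / \<epsilon>\<rceil>)"] allI impI)
    fix n k assume H: "max 2 (nat \<lceil>K / \<epsilon>\<rceil>) \<le> n \<and> k \<le> n \<and> P_quot_nonzero TYPE('f) m u k (n - k)"
    then obtain i j where "z_reachable m u (n - 1) (n - k) i j"
      using P_quot_nonzero_imp_z_reachable[of m u k "n - k"] assms(1) by auto
    moreover have "1 \<le> n" using H by simp
    ultimately have "\<bar>real (n - k) * (m + \<alpha>) - real n\<bar> \<le> K"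
      unfolding K_def by (intro z_reachable_odd_count_estimate[OF assms(2) disc \<alpha>])
    moreover have "K \<le> real n * \<epsilon>"
      using H assms(6) by (simp add: pos_divide_le_eq[symmetric] real_nat_ceiling_ge order_trans)
    ultimately have "\<bar>real (n - k) / real n - \<beta>\<bar> \<le> \<epsilon>"
      unfolding assms(5) using \<alpha> assms(1) H by (intro ratio_close) auto
    then show "\<beta> - \<epsilon> \<le> real (n - k) / real n \<and> real (n - k) / real n \<le> \<beta> + \<epsilon>"
      by linarith
  qed
qed

end
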